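(* Let $E$ and $B$ be finite dimensional JB$^*$-triples and let $f:S(E)\to S(B)$ be a surjective isometry. Let $e_1,e_2$ be two orthogonal finite rank tripotents in $E$, and for $j=1,2$ let $T_{e_j}:E_0(e_j)\to B_0(f(e_j))$ be the surjective real linear isometry satisfying $f(e_j+x)=f(e_j)+T_{e_j}(x)$ for every $x$ in the closed unit ball of $E_0(e_j)$. Then $T_{e_1}(x)=T_{e_2}(x)$ for all $x\in E_0(e_1)\cap E_0(e_2)$.
   Context: A JB$^*$-triple is a complex Banach space $E$ with a continuous triple product $\{\cdot,\cdot,\cdot\}$, bilinear and symmetric in the outer variables and conjugate linear in the middle one, such that, with $L(a,b)z=\{a,b,z\}$: $L(a,b)L(x,y)-L(x,y)L(a,b)=L(L(a,b)x,y)-L(x,L(b,a)y)$; $L(a,a)$ is hermitian with non-negative spectrum; $\|\{a,a,a\}\|=\|a\|^3$. A tripotent $e$ satisfies $\{e,e,e\}=e$; $E_i(e)$ ($i=0,1,2$) is the $\frac i2$-eigenspace of $L(e,e)$; $e$ is minimal if $E_2(e)=\mathbb{C}e\neq\{0\}$; $a\perp b$ means $L(a,b)=0$; a finite rank tripotent is a finite sum of mutually orthogonal minimal tripotents. For such $f$ and finite rank $e$, $f(e)$ is a finite rank tripotent of $B$ and a surjective real linear isometry $T_e$ as described exists. $S(X)$ is the unit sphere; a surjective isometry is a distance preserving surjection. *)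

theory Defs
  imports "HOL-Analysis.Analysis"
begin

definition complex_normed_structure :: "(complex \<Rightarrow> 'a::real_normed_vector \<Rightarrow> 'a) \<Rightarrow> bool" where
  "complex_normed_structure sm \<longleftrightarrow>
     (\<forall>r x. sm (complex_of_real r) x = r *\<^sub>R x) \<and>
     (\<forall>a b x. sm (a * b) x = sm a (sm b x)) \<and>
     (\<forall>a x y. sm a (x + y) = sm a x + sm a y) \<and>
     (\<forall>a b x. sm (a + b) x = sm a x + sm b x) \<and>
     (\<forall>a x. norm (sm a x) = cmod a * norm x)"

text \<open>Finite dimensionality (over the reals, equivalently over the complexes).\<close>
definition fin_dim_space :: "'a::real_vector itself \<Rightarrow> bool" where
  "fin_dim_space _ \<longleftrightarrow> (\<exists>S::'a set. finite S \<and> span S = UNIV)"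

text \<open>Hermitian operator: \<open>exp(i s T)\<close> is an isometry for every real \<open>s\<close>
  (i.e. \<open>\<parallel>exp(i s T)\<parallel> = 1\<close>), the exponential given by its power series.\<close>
definition hermitian_op :: "(complex \<Rightarrow> 'a::real_normed_vector \<Rightarrow> 'a) \<Rightarrow> ('a \<Rightarrow> 'a) \<Rightarrow> bool" where
  "hermitian_op sm T \<longleftrightarrow>
     (\<forall>s::real. \<forall>x. norm (\<Sum>n. sm ((\<i> * complex_of_real s) ^ n / fact n) ((T ^^ n) x)) = norm x)"

definition op_spectrum :: "(complex \<Rightarrow> 'a \<Rightarrow> 'a::real_vector) \<Rightarrow> ('a \<Rightarrow> 'a) \<Rightarrow> complex set" where
  "op_spectrum sm T = {c. \<not> bij (\<lambda>x. T x - sm c x)}"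

definition JB_star_triple ::
  "(complex \<Rightarrow> 'a::{real_normed_vector,banach} \<Rightarrow> 'a) \<Rightarrow> ('a \<Rightarrow> 'a \<Rightarrow> 'a \<Rightarrow> 'a) \<Rightarrow> bool" where
  "JB_star_triple sm t \<longleftrightarrow>
     complex_normed_structure sm \<and>
     continuous_on UNIV (\<lambda>(a, b, c). t a b c) \<and>
     (\<forall>a b c. t a b c = t c b a) \<and>
     (\<forall>a a' b c. t (a + a') b c = t a b c + t a' b c) \<and>
     (\<forall>k a b c. t (sm k a) b c = sm k (t a b c)) \<and>
     (\<forall>a b b' c. t a (b + b') c = t a b c + t a b' c) \<and>
     (\<forall>k a b c. t a (sm k b) c = sm (cnj k) (t a b c)) \<and>
     (\<forall>a b x y z. t a b (t x y z) - t x y (t a b z) = t (t a b x) y z - t x (t b a y) z) \<and>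
     (\<forall>a. hermitian_op sm (t a a)) \<and>
     (\<forall>a. \<forall>k\<in>op_spectrum sm (t a a). k \<in> \<real> \<and> Re k \<ge> 0) \<and>
     (\<forall>a. norm (t a a a) = norm a ^ 3)"

definition tripotent :: "('a \<Rightarrow> 'a \<Rightarrow> 'a \<Rightarrow> 'a) \<Rightarrow> 'a \<Rightarrow> bool" where
  "tripotent t e \<longleftrightarrow> t e e e = e"

definition peirce0 :: "('a \<Rightarrow> 'a \<Rightarrow> 'a \<Rightarrow> 'a) \<Rightarrow> 'a \<Rightarrow> 'a::zero set" where
  "peirce0 t e = {x. t e e x = 0}"

definition peirce2 :: "('a \<Rightarrow> 'a \<Rightarrow> 'a \<Rightarrow> 'a) \<Rightarrow> 'a \<Rightarrow> 'a set" where
  "peirce2 t e = {x. t e e x = x}"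

definition triple_orth :: "('a::zero \<Rightarrow> 'a \<Rightarrow> 'a \<Rightarrow> 'a) \<Rightarrow> 'a \<Rightarrow> 'a \<Rightarrow> bool" where
  "triple_orth t a b \<longleftrightarrow> (\<forall>z. t a b z = 0)"

definition minimal_tripotent ::
  "(complex \<Rightarrow> 'a \<Rightarrow> 'a::zero) \<Rightarrow> ('a \<Rightarrow> 'a \<Rightarrow> 'a \<Rightarrow> 'a) \<Rightarrow> 'a \<Rightarrow> bool" where
  "minimal_tripotent sm t e \<longleftrightarrow>
     tripotent t e \<and> peirce2 t e = range (\<lambda>c. sm c e) \<and> e \<noteq> 0"

definition finite_rank_tripotent ::
  "(complex \<Rightarrow> 'a \<Rightarrow> 'a::comm_monoid_add) \<Rightarrow> ('a \<Rightarrow> 'a \<Rightarrow> 'a \<Rightarrow> 'a) \<Rightarrow> 'a \<Rightarrow> bool" where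
  "finite_rank_tripotent sm t e \<longleftrightarrow>
     (\<exists>F. finite F \<and> F \<noteq> {} \<and> (\<forall>u\<in>F. minimal_tripotent sm t u) \<and>
          (\<forall>u\<in>F. \<forall>v\<in>F. u \<noteq> v \<longrightarrow> triple_orth t u v) \<and> e = \<Sum>F)"

end

theory Submission
  imports Defs
begin

text \<open>Writing \<open>e\<^sub>1 + e\<^sub>2 + x\<close> as \<open>e\<^sub>1 + (e\<^sub>2 + x)\<close> with \<open>e\<^sub>2 + x \<in> E\<^sub>0(e\<^sub>1)\<close> and as
  \<open>e\<^sub>2 + (e\<^sub>1 + x)\<close> with \<open>e\<^sub>1 + x \<in> E\<^sub>0(e\<^sub>2)\<close> gives
  \<open>f e\<^sub>1 + T\<^sub>1 e\<^sub>2 + T\<^sub>1 x = f e\<^sub>2 + T\<^sub>2 e\<^sub>1 + T\<^sub>2 x\<close> for small \<open>x\<close>; comparing with \<open>x = 0\<close>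
  and using homogeneity yields \<open>T\<^sub>1 = T\<^sub>2\<close> on \<open>E\<^sub>0(e\<^sub>1) \<inter> E\<^sub>0(e\<^sub>2)\<close>.
  The only geometric input is that \<open>\<parallel>e + b\<parallel> \<le> 1\<close> for a tripotent \<open>e\<close> and
  \<open>b \<in> E\<^sub>0(e)\<close> in the unit ball: the cube of \<open>e + b\<close> is \<open>e + {b,b,b}\<close>, so iterating
  cubes bounds \<open>\<parallel>e + b\<parallel>\<^bsup>3\<^sup>n\<^esup>\<close> by 2 for every \<open>n\<close>.\<close>

text \<open>Only the real-linear axioms, the Jordan identity and \<open>\<parallel>{a,a,a}\<parallel> = \<parallel>a\<parallel>^3\<close> of a
  \<open>JB\<^sup>*\<close>-triple are used.\<close>

locale real_jb_triple =
  fixes t :: "'a::real_normed_vector \<Rightarrow> 'a \<Rightarrow> 'a \<Rightarrow> 'a"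
  assumes outer_commute: "t a b c = t c b a"
    and add_left: "t (a + a') b c = t a b c + t a' b c"
    and add_middle: "t a (b + b') c = t a b c + t a b' c"
    and scaleR_left: "t (r *\<^sub>R a) b c = r *\<^sub>R t a b c"
    and jordan_identity: "t a b (t x y z) - t x y (t a b z) = t (t a b x) y z - t x (t b a y) z"
    and norm_cube: "norm (t a a a) = norm a ^ 3"
begin

lemma add_right: "t a b (c + c') = t a b c + t a b c'"
  by (metis outer_commute add_left)

lemma scaleR_right: "t a b (r *\<^sub>R c) = r *\<^sub>R t a b c"
  by (metis outer_commute scaleR_left)

lemma zero_left [simp]: "t 0 b c = 0"
  using add_left[of 0 0 b c] by simp

lemma zero_middle [simp]: "t a 0 c = 0"
  using add_middle[of a 0 0 c] by simp

lemma zero_right [simp]: "t a b 0 = 0"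
  by (metis outer_commute zero_left)

lemma jordan_identity': "t a b (t x y z) = t (t a b x) y z - t x (t b a y) z + t x y (t a b z)"
  using jordan_identity[of a b x y z] by (simp add: algebra_simps)

lemma sum_left: "finite F \<Longrightarrow> t (\<Sum>F) b c = (\<Sum>u\<in>F. t u b c)"
  by (induction F rule: finite_induct) (auto simp: add_left)

lemma sum_middle: "finite F \<Longrightarrow> t a (\<Sum>F) c = (\<Sum>u\<in>F. t a u c)"
  by (induction F rule: finite_induct) (auto simp: add_middle)

lemma sum_right: "finite F \<Longrightarrow> t a b (\<Sum>F) = (\<Sum>u\<in>F. t a b u)"
  by (induction F rule: finite_induct) (auto simp: add_right)

lemma triple_orth_commute:
  assumes "triple_orth t a b"
  shows "triple_orth t b a"
  unfolding triple_orth_def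
proof
  fix z
  have vanish: "t x (t b a y) w = 0" for x y w
    using jordan_identity'[of a b x y w] assms by (simp add: triple_orth_def)
  let ?p = "t b a z"
  have "norm ?p ^ 3 = 0"
    using vanish[of ?p z ?p] norm_cube[of ?p] by simp
  then show "t b a z = 0" by simp
qed

lemma tripotent_norm_le_1:
  assumes "tripotent t e"
  shows "norm e \<le> 1"
proof (rule ccontr)
  assume "\<not> norm e \<le> 1"
  then have "norm e * 1 < norm e * (norm e * norm e)"
    by (intro mult_strict_left_mono) (auto simp: less_1_mult)
  moreover have "norm e ^ 3 = norm e"
    using norm_cube[of e] assms by (simp add: tripotent_def)
  ultimately show False by (simp only: power3_eq_cube mult_1_right)
qed

lemma tripotent_sum_orthogonal:
  assumes F: "finite F" and "\<forall>u\<in>F. tripotent t u"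
    and orth: "\<forall>u\<in>F. \<forall>v\<in>F. u \<noteq> v \<longrightarrow> triple_orth t u v"
  shows "tripotent t (\<Sum>F)"
proof -
  have "t (\<Sum>F) (\<Sum>F) (\<Sum>F) = (\<Sum>w\<in>F. \<Sum>v\<in>F. \<Sum>u\<in>F. t u v w)"
    by (simp add: F sum_left sum_middle sum_right)
  also have "\<dots> = (\<Sum>w\<in>F. t w w w)"
  proof (rule sum.cong[OF refl])
    fix w assume w: "w \<in> F"
    have "t u v w = 0" if "u \<in> F" "v \<in> F" "u \<noteq> w \<or> v \<noteq> w" for u v
      using that orth w outer_commute unfolding triple_orth_def by metis
    then show "(\<Sum>v\<in>F. \<Sum>u\<in>F. t u v w) = t w w w"
      using F w by (simp add: sum.remove[of F w] sum.neutral)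
  qed
  also have "\<dots> = \<Sum>F"
    using assms(2) by (simp add: tripotent_def)
  finally show ?thesis by (simp add: tripotent_def)
qed

context
  fixes e b
  assumes e: "tripotent t e" and b: "b \<in> peirce0 t e"
begin

private lemma eeb: "t e e b = 0" and bee: "t b e e = 0" and eee: "t e e e = e"
  using b e outer_commute by (auto simp: peirce0_def tripotent_def)

private lemma ebe: "t e b e = 0"
proof -
  \<comment> \<open>The Jordan identity gives both \<open>p = 2 L(e,e) p\<close> and \<open>L(e,e) p = 2 p\<close>.\<close>
  let ?p = "t e b e"
  have "?p = t ?p e e + t e e ?p"
    using jordan_identity'[of e b e e e] eee bee by simp
  moreover have "t e e ?p = 2 *\<^sub>R ?p"
    using jordan_identity'[of e e e b e] eee eeb by (simp add: scaleR_2)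
  moreover have "t ?p e e = t e e ?p" by (rule outer_commute)
  ultimately have "1 *\<^sub>R ?p = 4 *\<^sub>R ?p"
    by (simp add: scaleR_left_distrib[symmetric])
  then show ?thesis by (simp only: scaleR_cancel_right) simp
qed

private lemma ebb: "t e b b = 0"
  using jordan_identity'[of e b e e b] jordan_identity'[of e e e b b] eee eeb ebe bee by simp

private lemma beb: "t b e b = 0"
  using jordan_identity'[of b e e e b] jordan_identity'[of e e b e b] eee eeb ebe bee by simp

lemma cube_add_peirce0: "t (e + b) (e + b) (e + b) = e + t b b b"
  using ebb outer_commute[of b b e]
  by (simp add: add_left add_middle add_right eee eeb bee ebe ebb beb)

lemma cube_in_peirce0: "t b b b \<in> peirce0 t e"
  using jordan_identity'[of e e b b b] eeb by (simp add: peirce0_def)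

end

lemma norm_add_peirce0_power_le:
  assumes e: "tripotent t e"
  shows "b \<in> peirce0 t e \<Longrightarrow> norm b \<le> 1 \<Longrightarrow> norm (e + b) ^ (3 ^ n) \<le> 2"
proof (induction n arbitrary: b)
  case 0
  then show ?case
    using tripotent_norm_le_1[OF e] norm_triangle_ineq[of e b] by simp
next
  case (Suc n)
  have "norm (t b b b) \<le> 1"
    using norm_cube[of b] Suc.prems(2) by (simp add: power_le_one)
  then have "norm (e + t b b b) ^ (3 ^ n) \<le> 2"
    using Suc.IH cube_in_peirce0[OF e Suc.prems(1)] by blast
  moreover have "norm (e + b) ^ (3 ^ Suc n) = norm (e + t b b b) ^ (3 ^ n)"
    using cube_add_peirce0[OF e Suc.prems(1)] norm_cube[of "e + b"]
    by (metis power_Suc power_mult)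
  ultimately show ?case by simp
qed

lemma norm_add_peirce0_le_1:
  assumes e: "tripotent t e" and b: "b \<in> peirce0 t e" "norm b \<le> 1"
  shows "norm (e + b) \<le> 1"
proof (rule ccontr)
  assume "\<not> ?thesis"
  then have gt1: "norm (e + b) > 1" by simp
  then obtain n where n: "2 < norm (e + b) ^ n" using real_arch_pow by blast
  have "n \<le> 3 ^ n"
    using less_exp[of n] power_mono[of 2 3 n] by simp
  then have "norm (e + b) ^ n \<le> norm (e + b) ^ (3 ^ n)"
    using gt1 by (intro power_increasing) auto
  with n norm_add_peirce0_power_le[OF e b, of n] show False by simp
qed

lemma peirce0_add: "x \<in> peirce0 t e \<Longrightarrow> y \<in> peirce0 t e \<Longrightarrow> x + y \<in> peirce0 t e"
  by (simp add: peirce0_def add_right)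

lemma peirce0_scaleR: "x \<in> peirce0 t e \<Longrightarrow> r *\<^sub>R x \<in> peirce0 t e"
  by (simp add: peirce0_def scaleR_right)

lemma orthogonal_in_peirce0:
  assumes "triple_orth t e1 e2"
  shows "e2 \<in> peirce0 t e1"
  using triple_orth_commute[OF assms] outer_commute[of e1 e1 e2]
  by (simp add: peirce0_def triple_orth_def)

lemma finite_rank_tripotent_tripotent:
  assumes "finite_rank_tripotent sm t e"
  shows "tripotent t e"
proof -
  obtain F where "finite F" "\<forall>u\<in>F. minimal_tripotent sm t u"
    "\<forall>u\<in>F. \<forall>v\<in>F. u \<noteq> v \<longrightarrow> triple_orth t u v" "e = \<Sum>F"
    using assms unfolding finite_rank_tripotent_def by blast
  then show ?thesis
    using tripotent_sum_orthogonal by (simp add: minimal_tripotent_def)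
qed

end

lemma JB_star_triple_real_jb_triple:
  assumes "JB_star_triple sm t"
  shows "real_jb_triple t"
proof -
  have "complex_normed_structure sm"
    using assms unfolding JB_star_triple_def by blast
  then have real_scale: "sm (complex_of_real r) x = r *\<^sub>R x" for r x
    unfolding complex_normed_structure_def by blast
  show ?thesis
    unfolding real_jb_triple_def
  proof (intro conjI allI)
    show "t (r *\<^sub>R a) b c = r *\<^sub>R t a b c" for r a b c
      using assms unfolding JB_star_triple_def by (metis real_scale)
  qed (use assms in \<open>auto simp: JB_star_triple_def\<close>)
qed

lemma homogeneous_eq_if_eq_on_unit_ball:
  fixes T1 T2 :: "'a::real_normed_vector \<Rightarrow> 'b::real_vector"
  assumes "x \<in> S" and "\<forall>r. \<forall>y\<in>S. r *\<^sub>R y \<in> S"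
    and "\<forall>r. \<forall>y\<in>S. T1 (r *\<^sub>R y) = r *\<^sub>R T1 y"
    and "\<forall>r. \<forall>y\<in>S. T2 (r *\<^sub>R y) = r *\<^sub>R T2 y"
    and "\<forall>y\<in>S. norm y \<le> 1 \<longrightarrow> T1 y = T2 y"
  shows "T1 x = T2 x"
proof -
  define s where "s = 1 / (norm x + 1)"
  have "norm x + 1 > 0"
    by (simp add: add_nonneg_pos)
  then have s: "s > 0" "norm (s *\<^sub>R x) \<le> 1"
    by (auto simp: s_def divide_le_eq)
  then have "s *\<^sub>R T1 x = s *\<^sub>R T2 x"
    using assms by metis
  with s show ?thesis by simp
qed

theorem lemma3p18:
  fixes smE :: "complex \<Rightarrow> 'a::{real_normed_vector,banach} \<Rightarrow> 'a"
    and tE :: "'a \<Rightarrow> 'a \<Rightarrow> 'a \<Rightarrow> 'a"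
    and smB :: "complex \<Rightarrow> 'b::{real_normed_vector,banach} \<Rightarrow> 'b"
    and tB :: "'b \<Rightarrow> 'b \<Rightarrow> 'b \<Rightarrow> 'b"
    and f :: "'a \<Rightarrow> 'b"
    and e1 e2 :: 'a
    and T1 T2 :: "'a \<Rightarrow> 'b"
  assumes E: "JB_star_triple smE tE" and Efd: "fin_dim_space TYPE('a)"
    and B: "JB_star_triple smB tB" and Bfd: "fin_dim_space TYPE('b)"
    and f_onto: "f ` sphere 0 1 = sphere 0 1"
    and f_isom: "\<forall>x\<in>sphere 0 1. \<forall>y\<in>sphere 0 1. dist (f x) (f y) = dist x y"
    and e1: "finite_rank_tripotent smE tE e1"
    and e2: "finite_rank_tripotent smE tE e2"
    and orth: "triple_orth tE e1 e2"
    and T1_onto: "T1 ` peirce0 tE e1 = peirce0 tB (f e1)"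
    and T1_add: "\<forall>x\<in>peirce0 tE e1. \<forall>y\<in>peirce0 tE e1. T1 (x + y) = T1 x + T1 y"
    and T1_scale: "\<forall>r::real. \<forall>x\<in>peirce0 tE e1. T1 (r *\<^sub>R x) = r *\<^sub>R T1 x"
    and T1_isom: "\<forall>x\<in>peirce0 tE e1. \<forall>y\<in>peirce0 tE e1. dist (T1 x) (T1 y) = dist x y"
    and T1_f: "\<forall>x\<in>peirce0 tE e1. norm x \<le> 1 \<longrightarrow> f (e1 + x) = f e1 + T1 x"
    and T2_onto: "T2 ` peirce0 tE e2 = peirce0 tB (f e2)"
    and T2_add: "\<forall>x\<in>peirce0 tE e2. \<forall>y\<in>peirce0 tE e2. T2 (x + y) = T2 x + T2 y"
    and T2_scale: "\<forall>r::real. \<forall>x\<in>peirce0 tE e2. T2 (r *\<^sub>R x) = r *\<^sub>R T2 x"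
    and T2_isom: "\<forall>x\<in>peirce0 tE e2. \<forall>y\<in>peirce0 tE e2. dist (T2 x) (T2 y) = dist x y"
    and T2_f: "\<forall>x\<in>peirce0 tE e2. norm x \<le> 1 \<longrightarrow> f (e2 + x) = f e2 + T2 x"
  shows "\<forall>x \<in> peirce0 tE e1 \<inter> peirce0 tE e2. T1 x = T2 x"
proof -
  interpret real_jb_triple tE by (rule JB_star_triple_real_jb_triple[OF E])
  have tri1: "tripotent tE e1" and tri2: "tripotent tE e2"
    using e1 e2 by (auto intro: finite_rank_tripotent_tripotent)
  have e2_in: "e2 \<in> peirce0 tE e1" and e1_in: "e1 \<in> peirce0 tE e2"
    using orthogonal_in_peirce0 orth triple_orth_commute by blast+
  let ?S = "peirce0 tE e1 \<inter> peirce0 tE e2"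
  have two_ways: "f e1 + T1 e2 + T1 z = f e2 + T2 e1 + T2 z" if z: "z \<in> ?S" "norm z \<le> 1" for z
  proof -
    have "e2 + z \<in> peirce0 tE e1" "e1 + z \<in> peirce0 tE e2"
      using peirce0_add e1_in e2_in z by auto
    moreover have "norm (e2 + z) \<le> 1" "norm (e1 + z) \<le> 1"
      using norm_add_peirce0_le_1 tri1 tri2 z by auto
    ultimately have "f (e1 + (e2 + z)) = f e1 + T1 (e2 + z)"
      and "f (e2 + (e1 + z)) = f e2 + T2 (e1 + z)"
      using T1_f T2_f by auto
    moreover have "T1 (e2 + z) = T1 e2 + T1 z" "T2 (e1 + z) = T2 e1 + T2 z"
      using T1_add T2_add e1_in e2_in z by auto
    ultimately show ?thesis
      by (metis add.assoc add.left_commute)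
  qed
  have "T1 0 = 0" "T2 0 = 0"
    using T1_scale[rule_format, of 0 0] T2_scale[rule_format, of 0 0] by (simp_all add: peirce0_def)
  then have "f e1 + T1 e2 = f e2 + T2 e1"
    using two_ways[of 0] by (simp add: peirce0_def)
  then have "\<forall>z\<in>?S. norm z \<le> 1 \<longrightarrow> T1 z = T2 z"
    using two_ways by fastforce
  moreover have "\<forall>r. \<forall>y\<in>?S. r *\<^sub>R y \<in> ?S"
    by (simp add: peirce0_scaleR)
  ultimately show ?thesis
    using homogeneous_eq_if_eq_on_unit_ball[of _ ?S T1 T2] T1_scale T2_scale by blast
qed

end
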